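(* If $r\ge 10$ is an integer, then $\rho_2(K(3r-3,r))=3$.
   Context: For integers $n\ge 2r$, the Kneser graph $K(n,r)$ has as vertices the $r$-element subsets of $[n]=\{1,\dots,n\}$, two vertices being adjacent iff they are disjoint. A $2$-packing of a graph $G$ is a set of vertices that are pairwise at distance at least $3$ in $G$ (equivalently, no two are adjacent and no two have a common neighbor); $\rho_2(G)$ is the maximum cardinality of a $2$-packing. *)

theory Defs
  imports Main
begin

definition kneser_vertices :: "nat \<Rightarrow> nat \<Rightarrow> nat set set" where
  "kneser_vertices n r = {A. A \<subseteq> {1..n} \<and> card A = r}"

text \<open>Adjacency in K(n,r): disjointness (for r >= 1 this is irreflexive).\<close>
definition kneser_adj :: "nat set \<Rightarrow> nat set \<Rightarrow> bool" where
  "kneser_adj A B \<longleftrightarrow> A \<inter> B = {}"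

text \<open>A 2-packing of K(n,r): a set of vertices, pairwise distinct ones being
  non-adjacent and having no common neighbour (i.e. pairwise distance at least 3).\<close>
definition kneser_2packing :: "nat \<Rightarrow> nat \<Rightarrow> nat set set \<Rightarrow> bool" where
  "kneser_2packing n r P \<longleftrightarrow> P \<subseteq> kneser_vertices n r \<and>
     (\<forall>A\<in>P. \<forall>B\<in>P. A \<noteq> B \<longrightarrow>
        \<not> kneser_adj A B \<and>
        \<not> (\<exists>C\<in>kneser_vertices n r. kneser_adj A C \<and> kneser_adj C B))"

definition rho2_kneser :: "nat \<Rightarrow> nat \<Rightarrow> nat" where
  "rho2_kneser n r = Max {card P | P. kneser_2packing n r P}"

end

theory Submission
  imports Defs
begin

text \<open>Two vertices A, B of K(n,r) have a common neighbour iff the complement of A \<union> B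
  still contains r points, i.e. |A \<union> B| + r \<le> n. For n = 3r - 3 this says |A \<inter> B| \<ge> 3, so
  the 2-packings are the families of r-sets meeting pairwise in one or two points. Four such
  sets in a ground set of 3r - 3 points would, by the Bonferroni inequality, force
  4r \<le> (3r - 3) + 6 \<cdot> 2, i.e. r \<le> 9; and three exist, e.g. [1,r], {1,2} \<union> [r+1,2r-2] and
  {1} \<union> [2r-1,3r-3].\<close>

lemma card_Union_Bonferroni:
  assumes "finite F" "\<forall>A\<in>F. finite A"
  shows "2 * (\<Sum>A\<in>F. card A) \<le> 2 * card (\<Union>F) + (\<Sum>A\<in>F. \<Sum>B\<in>F - {A}. card (A \<inter> B))"
  using assms
proof (induction F rule: finite_induct)
  case empty
  then show ?case by simp
next
  case (insert A F)
  have fin: "finite A" "finite (\<Union>F)" "\<forall>B\<in>F. finite B"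
    using insert by auto
  have overlap: "card (A \<inter> \<Union>F) \<le> (\<Sum>B\<in>F. card (A \<inter> B))"
    unfolding Int_Union using insert.hyps(1) by (metis card_UN_le)
  have union: "card (A \<union> \<Union>F) + card (A \<inter> \<Union>F) = card A + card (\<Union>F)"
    using card_Un_Int[OF fin(1,2)] by simp
  have "(\<Sum>X\<in>insert A F. \<Sum>Y\<in>insert A F - {X}. card (X \<inter> Y))
      = (\<Sum>B\<in>F. card (A \<inter> B)) + (\<Sum>X\<in>F. card (X \<inter> A) + (\<Sum>Y\<in>F - {X}. card (X \<inter> Y)))"
  proof -
    have "insert A F - {X} = insert A (F - {X})" if "X \<in> F" for X
      using that insert.hyps(2) by auto
    then have "(\<Sum>X\<in>F. \<Sum>Y\<in>insert A F - {X}. card (X \<inter> Y))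
        = (\<Sum>X\<in>F. card (X \<inter> A) + (\<Sum>Y\<in>F - {X}. card (X \<inter> Y)))"
      using insert.hyps by (intro sum.cong) auto
    moreover have "insert A F - {A} = F" using insert.hyps(2) by auto
    ultimately show ?thesis using insert.hyps by simp
  qed
  also have "\<dots> = 2 * (\<Sum>B\<in>F. card (A \<inter> B)) + (\<Sum>X\<in>F. \<Sum>Y\<in>F - {X}. card (X \<inter> Y))"
    by (simp add: sum.distrib Int_commute)
  finally show ?case
    using insert.IH fin(3) insert.hyps overlap union by simp
qed

lemma kneser_common_neighbour_iff:
  assumes "A \<in> kneser_vertices n r" "B \<in> kneser_vertices n r"
  shows "(\<exists>C\<in>kneser_vertices n r. kneser_adj A C \<and> kneser_adj C B) \<longleftrightarrow> card (A \<union> B) + r \<le> n"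
proof
  assume "\<exists>C\<in>kneser_vertices n r. kneser_adj A C \<and> kneser_adj C B"
  then obtain C where C: "C \<subseteq> {1..n}" "card C = r" "C \<inter> (A \<union> B) = {}"
    unfolding kneser_vertices_def kneser_adj_def by blast
  have "A \<union> B \<subseteq> {1..n}" using assms unfolding kneser_vertices_def by blast
  with C have "card (C \<union> (A \<union> B)) \<le> card {1..n}"
    by (intro card_mono) auto
  moreover have "card (C \<union> (A \<union> B)) = card C + card (A \<union> B)"
    using C \<open>A \<union> B \<subseteq> {1..n}\<close> by (intro card_Un_disjoint) (auto intro: finite_subset)
  ultimately show "card (A \<union> B) + r \<le> n" using C by simp
next
  assume room: "card (A \<union> B) + r \<le> n"
  have "A \<union> B \<subseteq> {1..n}" using assms unfolding kneser_vertices_def by blast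
  then have "card ({1..n} - (A \<union> B)) = n - card (A \<union> B)"
    by (metis card_Diff_subset card_atLeastAtMost diff_Suc_1 finite_atLeastAtMost finite_subset)
  with room have "r \<le> card ({1..n} - (A \<union> B))"
    by simp
  then obtain C where C: "C \<subseteq> {1..n} - (A \<union> B)" "card C = r"
    by (meson obtain_subset_with_card_n)
  then show "\<exists>C\<in>kneser_vertices n r. kneser_adj A C \<and> kneser_adj C B"
    unfolding kneser_vertices_def kneser_adj_def by blast
qed

lemma kneser_2packing_iff:
  "kneser_2packing n r P \<longleftrightarrow> P \<subseteq> kneser_vertices n r \<and>
     (\<forall>A\<in>P. \<forall>B\<in>P. A \<noteq> B \<longrightarrow> A \<inter> B \<noteq> {} \<and> n < card (A \<union> B) + r)"
proof (cases "P \<subseteq> kneser_vertices n r")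
  case True
  then have "\<forall>A\<in>P. \<forall>B\<in>P. (\<not> (\<exists>C\<in>kneser_vertices n r. kneser_adj A C \<and> kneser_adj C B))
      \<longleftrightarrow> n < card (A \<union> B) + r"
    using kneser_common_neighbour_iff by (simp add: subset_iff not_le)
  moreover have "\<not> kneser_adj A B \<longleftrightarrow> A \<inter> B \<noteq> {}" for A B
    unfolding kneser_adj_def ..
  ultimately show ?thesis
    unfolding kneser_2packing_def using True by auto
next
  case False
  then show ?thesis unfolding kneser_2packing_def by blast
qed

lemma kneser_2packing_3r_minus_3_iff:
  assumes "r \<ge> 1"
  shows "kneser_2packing (3 * r - 3) r P \<longleftrightarrow> P \<subseteq> kneser_vertices (3 * r - 3) r \<and>
     (\<forall>A\<in>P. \<forall>B\<in>P. A \<noteq> B \<longrightarrow> A \<inter> B \<noteq> {} \<and> card (A \<inter> B) \<le> 2)"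
proof -
  have "3 * r - 3 < card (A \<union> B) + r \<longleftrightarrow> card (A \<inter> B) \<le> 2"
    if "A \<in> kneser_vertices (3 * r - 3) r" "B \<in> kneser_vertices (3 * r - 3) r" for A B
  proof -
    have "finite A" "finite B" "card A = r" "card B = r"
      using that unfolding kneser_vertices_def by (auto intro: finite_subset)
    moreover have "card (A \<inter> B) \<le> card A"
      using \<open>finite A\<close> by (simp add: card_mono)
    ultimately show ?thesis
      using card_Un_Int[of A B] assms by linarith
  qed
  then show ?thesis
    unfolding kneser_2packing_iff by blast
qed

lemma card_kneser_2packing_3r_minus_3_le:
  assumes "r \<ge> 10" and P: "kneser_2packing (3 * r - 3) r P"
  shows "card P \<le> 3"
proof (rule ccontr)
  assume "\<not> card P \<le> 3"
  then have "4 \<le> card P" by simp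
  then obtain Q where "Q \<subseteq> P" and card_Q: "card Q = 4"
    by (meson obtain_subset_with_card_n)
  then have fin_Q: "finite Q" by (simp add: card_ge_0_finite)
  have members: "A \<subseteq> {1..3 * r - 3} \<and> card A = r" if "A \<in> Q" for A
    using P \<open>Q \<subseteq> P\<close> that unfolding kneser_2packing_def kneser_vertices_def by blast
  have "\<forall>A\<in>P. \<forall>B\<in>P. A \<noteq> B \<longrightarrow> A \<inter> B \<noteq> {} \<and> card (A \<inter> B) \<le> 2"
    using P assms(1) kneser_2packing_3r_minus_3_iff[of r P] by simp
  then have small: "card (A \<inter> B) \<le> 2" if "A \<in> Q" "B \<in> Q" "A \<noteq> B" for A B
    using \<open>Q \<subseteq> P\<close> that by blast
  have "\<Union>Q \<subseteq> {1..3 * r - 3}"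
    using members by blast
  from card_mono[OF finite_atLeastAtMost this] have "card (\<Union>Q) \<le> 3 * r - 3"
    by simp
  moreover have "(\<Sum>A\<in>Q. card A) = 4 * r"
    using card_Q members by simp
  moreover have "(\<Sum>A\<in>Q. \<Sum>B\<in>Q - {A}. card (A \<inter> B)) \<le> (\<Sum>A\<in>Q. \<Sum>B\<in>Q - {A}. 2)"
    using small by (intro sum_mono) auto
  moreover have "(\<Sum>A\<in>Q. \<Sum>B\<in>Q - {A}. 2::nat) = 24"
    using card_Q fin_Q by simp
  moreover have "2 * (\<Sum>A\<in>Q. card A) \<le> 2 * card (\<Union>Q) + (\<Sum>A\<in>Q. \<Sum>B\<in>Q - {A}. card (A \<inter> B))"
    using fin_Q members by (intro card_Union_Bonferroni) (auto intro: finite_subset)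
  ultimately show False
    using assms(1) by linarith
qed

lemma ex_kneser_2packing_3r_minus_3_card_3:
  assumes "r \<ge> 3"
  shows "\<exists>P. kneser_2packing (3 * r - 3) r P \<and> card P = 3"
proof -
  define A where "A = {1..r}"
  define B where "B = {1, 2} \<union> {r + 1..2 * r - 2}"
  define C where "C = insert 1 {2 * r - 1..3 * r - 3}"
  have "card A = r" "card B = r" "card C = r"
    unfolding A_def B_def C_def using assms by (simp_all add: card_Un_disjoint)
  moreover have "A \<subseteq> {1..3 * r - 3}" "B \<subseteq> {1..3 * r - 3}" "C \<subseteq> {1..3 * r - 3}"
    unfolding A_def B_def C_def using assms by auto
  ultimately have vertices: "{A, B, C} \<subseteq> kneser_vertices (3 * r - 3) r"
    unfolding kneser_vertices_def by blast
  have inter: "A \<inter> B = {1, 2}" "A \<inter> C = {1}" "B \<inter> C = {1}"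
    unfolding A_def B_def C_def using assms by auto
  then have "card (A \<inter> B) = 2" "card (A \<inter> C) = 1" "card (B \<inter> C) = 1"
    by simp_all
  then have "A \<noteq> B" "A \<noteq> C" "B \<noteq> C"
    using \<open>card A = r\<close> \<open>card B = r\<close> assms by (intro notI; simp)+
  then have three: "card {A, B, C} = 3" by simp
  have pairwise: "X \<inter> Y \<noteq> {} \<and> card (X \<inter> Y) \<le> 2"
    if "X \<in> {A, B, C}" "Y \<in> {A, B, C}" "X \<noteq> Y" for X Y
  proof -
    have "B \<inter> A = {1, 2}" "C \<inter> A = {1}" "C \<inter> B = {1}"
      using inter by blast+
    with that(3) inter show ?thesis
      using that(1,2) by (elim insertE emptyE; simp)
  qed
  have "r \<ge> 1" using assms by simp
  then have "kneser_2packing (3 * r - 3) r {A, B, C}"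
    using kneser_2packing_3r_minus_3_iff[of r "{A, B, C}"] vertices pairwise by blast
  with three show ?thesis by blast
qed

theorem proposition4p2:
  fixes r :: nat
  assumes "r \<ge> 10"
  shows "rho2_kneser (3 * r - 3) r = 3"
proof -
  let ?sizes = "{card P | P. kneser_2packing (3 * r - 3) r P}"
  have "3 \<in> ?sizes"
    using ex_kneser_2packing_3r_minus_3_card_3[of r] assms by auto
  moreover have bounded: "?sizes \<subseteq> {..3}"
    using card_kneser_2packing_3r_minus_3_le[OF assms] by auto
  moreover have "finite ?sizes"
    using finite_subset[OF bounded] by simp
  ultimately show ?thesis
    unfolding rho2_kneser_def by (intro Max_eqI) auto
qed

end
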